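(* In the setting of the context, assume (G1), (G2') and ($\overline G{}_3'$), and let $\tilde\rho$ be a metric on $X$ inducing its topology, with constants $\gamma\ge1$, $C\ge1$ such that $C^{-1}\tilde\rho(x,y)^{-\gamma}\le\tilde G(x,y)\le C\tilde\rho(x,y)^{-\gamma}$ for all $x,y$. Then there exists $\tilde c_2\ge1$ such that $$\widetilde{\operatorname{cap}}\,\tilde U(x,r)\ \ge\ \tilde c_2^{-1}\,r^{\gamma}\qquad\text{for all }x\in X_0,\ 0<r<\tilde R_0(x).$$
   Context: $(X,\rho)$ separable metric space, $X_0\subsetneq X$ open. $\mathcal M(X)$ finite Borel measures (extended to universally measurable sets), $\|\mu\|=\mu(X)$. For every open $U\subseteq X$ and $x\in X$ a measure $\mu_x^U\in\mathcal M(X)$ is given such that for all open $U,V$ and $x$: $\mu_x^U(U)=0$, $\|\mu_x^U\|\le1$, $\mu_x^U=\varepsilon_x$ (Dirac) if $x\notin U$; $y\mapsto\mu_y^U(E)$ universally measurable for Borel $E$; $\mu_x^U=\int\mu_y^U\,d\mu_x^V(y)$ if $V\subseteq U$. For closed $A$, $\varepsilon_x^A:=\mu_x^{X\setminus A}$. $\mathcal U(X_0)$: open $U$ with $\overline U\subseteq X_0$. $G\colon X\times X\to(0,\infty]$ Borel, $G\nu(x)=\int G(x,y)d\nu(y)$; $V(x,s):=\{y:G(y,x)^{-1}<s\}$; $S_0(x):=\sup\{s>0:\overline{V(x,s)}\subseteq X_0\}$. $\tilde U(x,r):=\{y:\tilde\rho(x,y)<r\}$, $\tilde R_0(x):=\sup\{r>0:\overline{\tilde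 U(x,r)}\subseteq X_0\}$. For universally measurable $A$, $\widetilde{\operatorname{cap}}A:=\sup\{\|\mu\|:\mu\in\mathcal M(X),\ \mu(X\setminus A)=0,\ \int\tilde G(\cdot,y)\,d\mu(y)\le1\}$. (G1): there is $c_1\ge1$ such that for all $U\in\mathcal U(X_0)$, $x\in U$, $\delta>0$, closed $A\subseteq U$ there are a closed neighborhood $B\subseteq U$ of $A$ and a measure $\nu$ carried by $B$ with $\|\varepsilon_x^B\|-\delta<c_1\|\varepsilon_x^A\|$ and $\|\varepsilon_y^A\|\le G\nu(y)\le c_1\|\varepsilon_y^B\|$ for all $y$. (G2'): for every $x$, $G(x,x)=\lim_{y\to x}G(y,x)=\infty$; there is a Borel $w$ with $0<w\le1$ and $\int w\,d\mu_x^U\le w(x)$ for all open $U$, $x$; there is $\tilde c>1$ with $\tilde G(x,z)\wedge\tilde G(y,z)\le\tilde c\tilde G(x,y)$ for all $x,y,z$, where $\tilde G(x,y):=G(x,y)/(w(x)w(y))$; $\lambda:=\inf w(X_0)>0$; for each $x$ and neighborhood $V$ of $x$, $G(\cdot,x)/w$ is bounded on $X\setminus V$. ($\overline G{}_3'$): there is $c_3\ge1$ with $\|\varepsilon_y^{\overline{V(x,s)}}\|\ge c_3^{-1}sG(y,x)$ for all $x\in X_0$, $0<s<S_0(x)$, $y\in X\setminus V(x,s)$. *)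

theory Defs
  imports "HOL-Probability.Probability"
begin

text \<open>X is the whole (separable metric) type 'a; measures are finite Borel measures on it.\<close>

definition fin_borel :: "'a::topological_space measure \<Rightarrow> bool" where
  "fin_borel M \<longleftrightarrow> sets M = sets borel \<and> finite_measure M"

definition mnorm :: "'a measure \<Rightarrow> ennreal" where
  "mnorm M = emeasure M (space M)"

definition univ_meas_fun :: "('a::topological_space \<Rightarrow> ennreal) \<Rightarrow> bool" where
  "univ_meas_fun f \<longleftrightarrow> (\<forall>M. fin_borel M \<longrightarrow> f \<in> borel_measurable (completion M))"

definition eps :: "('a set \<Rightarrow> 'a \<Rightarrow> 'a measure) \<Rightarrow> 'a set \<Rightarrow> 'a \<Rightarrow> 'a measure" where
  "eps mu A x = mu (- A) x"

definition Gpot :: "('a \<Rightarrow> 'a \<Rightarrow> ennreal) \<Rightarrow> 'a measure \<Rightarrow> 'a \<Rightarrow> ennreal" where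
  "Gpot G \<nu> x = (\<integral>\<^sup>+ y. G x y \<partial>\<nu>)"

definition Gt :: "('a \<Rightarrow> 'a \<Rightarrow> ennreal) \<Rightarrow> ('a \<Rightarrow> real) \<Rightarrow> 'a \<Rightarrow> 'a \<Rightarrow> ennreal" where
  "Gt G w x y = G x y / ennreal (w x * w y)"

definition Vset :: "('a \<Rightarrow> 'a \<Rightarrow> ennreal) \<Rightarrow> 'a \<Rightarrow> real \<Rightarrow> 'a set" where
  "Vset G x s = {y. inverse (G y x) < ennreal s}"

definition S0 :: "'a::topological_space set \<Rightarrow> ('a \<Rightarrow> 'a \<Rightarrow> ennreal) \<Rightarrow> 'a \<Rightarrow> ereal" where
  "S0 X0 G x = Sup {ereal s | s. s > 0 \<and> closure (Vset G x s) \<subseteq> X0}"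

definition Ut :: "('a \<Rightarrow> 'a \<Rightarrow> real) \<Rightarrow> 'a \<Rightarrow> real \<Rightarrow> 'a set" where
  "Ut rt x r = {y. rt x y < r}"

definition R0t :: "'a::topological_space set \<Rightarrow> ('a \<Rightarrow> 'a \<Rightarrow> real) \<Rightarrow> 'a \<Rightarrow> ereal" where
  "R0t X0 rt x = Sup {ereal r | r. r > 0 \<and> closure (Ut rt x r) \<subseteq> X0}"

definition capt :: "('a::topological_space \<Rightarrow> 'a \<Rightarrow> ennreal) \<Rightarrow> ('a \<Rightarrow> real) \<Rightarrow> 'a set \<Rightarrow> ennreal" where
  "capt G w A = Sup {mnorm M | M. fin_borel M \<and> emeasure (completion M) (- A) = 0 \<and>
                        (\<forall>x. (\<integral>\<^sup>+ y. Gt G w x y \<partial>M) \<le> 1)}"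

definition rpow_neg :: "real \<Rightarrow> real \<Rightarrow> ennreal" where
  "rpow_neg r g = (if r = 0 then \<infinity> else ennreal (r powr (- g)))"

definition std_setting :: "'a::topological_space set \<Rightarrow> ('a set \<Rightarrow> 'a \<Rightarrow> 'a measure) \<Rightarrow> ('a \<Rightarrow> 'a \<Rightarrow> ennreal) \<Rightarrow> bool" where
  "std_setting X0 mu G \<longleftrightarrow>
     open X0 \<and> X0 \<noteq> UNIV \<and>
     (\<forall>U x. open U \<longrightarrow>
        fin_borel (mu U x) \<and> emeasure (mu U x) U = 0 \<and> mnorm (mu U x) \<le> 1 \<and>
        (x \<notin> U \<longrightarrow> mu U x = return borel x) \<and>
        (\<forall>E \<in> sets borel. univ_meas_fun (\<lambda>y. emeasure (mu U y) E)) \<and>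
        (\<forall>V. open V \<and> V \<subseteq> U \<longrightarrow> (\<forall>E \<in> sets borel.
            emeasure (mu U x) E = (\<integral>\<^sup>+ y. emeasure (mu U y) E \<partial>(completion (mu V x)))))) \<and>
     (\<forall>x y. 0 < G x y) \<and> case_prod G \<in> borel_measurable borel"

definition cond_G1 :: "'a::topological_space set \<Rightarrow> ('a set \<Rightarrow> 'a \<Rightarrow> 'a measure) \<Rightarrow> ('a \<Rightarrow> 'a \<Rightarrow> ennreal) \<Rightarrow> bool" where
  "cond_G1 X0 mu G \<longleftrightarrow> (\<exists>c1::real. c1 \<ge> 1 \<and>
     (\<forall>U x \<delta> A. open U \<and> closure U \<subseteq> X0 \<and> x \<in> U \<and> \<delta> > 0 \<and> closed A \<and> A \<subseteq> U \<longrightarrow>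
        (\<exists>B \<nu>. closed B \<and> A \<subseteq> interior B \<and> B \<subseteq> U \<and> fin_borel \<nu> \<and> emeasure \<nu> (- B) = 0 \<and>
           mnorm (eps mu B x) < ennreal c1 * mnorm (eps mu A x) + ennreal \<delta> \<and>
           (\<forall>y. mnorm (eps mu A y) \<le> Gpot G \<nu> y \<and> Gpot G \<nu> y \<le> ennreal c1 * mnorm (eps mu B y)))))"

definition cond_G2' :: "'a::topological_space set \<Rightarrow> ('a set \<Rightarrow> 'a \<Rightarrow> 'a measure) \<Rightarrow> ('a \<Rightarrow> 'a \<Rightarrow> ennreal) \<Rightarrow> ('a \<Rightarrow> real) \<Rightarrow> bool" where
  "cond_G2' X0 mu G w \<longleftrightarrow>
     (\<forall>x. G x x = \<infinity> \<and> ((\<lambda>y. G y x) \<longlongrightarrow> \<infinity>) (at x)) \<and>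
     w \<in> borel_measurable borel \<and> (\<forall>x. 0 < w x \<and> w x \<le> 1) \<and>
     (\<forall>U x. open U \<longrightarrow> (\<integral>\<^sup>+ y. ennreal (w y) \<partial>(mu U x)) \<le> ennreal (w x)) \<and>
     (\<exists>ct::real. ct > 1 \<and> (\<forall>x y z. min (Gt G w x z) (Gt G w y z) \<le> ennreal ct * Gt G w x y)) \<and>
     (\<exists>lam::real. lam > 0 \<and> (\<forall>x \<in> X0. lam \<le> w x)) \<and>
     (\<forall>x V. open V \<and> x \<in> V \<longrightarrow> (\<exists>M::real. \<forall>y \<in> - V. G y x / ennreal (w y) \<le> ennreal M))"

definition cond_G3' :: "'a::topological_space set \<Rightarrow> ('a set \<Rightarrow> 'a \<Rightarrow> 'a measure) \<Rightarrow> ('a \<Rightarrow> 'a \<Rightarrow> ennreal) \<Rightarrow> bool" where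
  "cond_G3' X0 mu G \<longleftrightarrow> (\<exists>c3::real. c3 \<ge> 1 \<and>
     (\<forall>x s y. x \<in> X0 \<and> 0 < s \<and> ereal s < S0 X0 G x \<and> y \<notin> Vset G x s \<longrightarrow>
        ennreal (s / c3) * G y x \<le> mnorm (eps mu (closure (Vset G x s)) y)))"

end

theory Submission
  imports Defs
begin

text \<open>Fix \<open>x \<in> X0\<close> and \<open>0 < r < R0t x\<close>, and put \<open>s = (r/8)\<^sup>\<gamma> / C\<close>. The upper kernel bound gives
  \<open>V(x,s) \<subseteq> Ut x (r/8)\<close>, so (G1) applied to \<open>A = closure V(x,s)\<close> inside \<open>U = Ut x (r/2)\<close> yields a
  measure \<open>\<nu>\<close> carried by \<open>B \<subseteq> U\<close> with \<open>\<parallel>\<epsilon>\<^sup>A\<parallel> \<le> G\<nu> \<le> c1 \<parallel>\<epsilon>\<^sup>B\<parallel>\<close>. At a point \<open>y \<notin> X0\<close>,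
  (G3') and the lower kernel bound bound \<open>G\<nu>(y)\<close> from below by a multiple of
  \<open>s rt(x,y)\<^sup>-\<^sup>\<gamma> w(y) w(x)\<close>, while \<open>\<nu>\<close> lives within \<open>r/2\<close> of \<open>x\<close>, so the upper kernel bound gives
  \<open>G\<nu>(y) \<le> C (rt(x,y)/2)\<^sup>-\<^sup>\<gamma> w(y) \<parallel>\<nu>\<parallel>\<close>; hence \<open>\<parallel>\<nu>\<parallel>\<close> is at least a multiple of \<open>r\<^sup>\<gamma>\<close>.
  Since \<open>w\<close> is supermedian and at least \<open>lam\<close> on \<open>X0 \<supseteq> B\<close>, \<open>\<parallel>\<epsilon>\<^sup>B\<parallel> \<le> w / lam\<close>, so
  \<open>G\<nu> \<le> (c1 / lam) w\<close>. The measure \<open>(lam / c1) w \<nu>\<close> is then admissible for the capacity of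
  \<open>Ut x r\<close> and has mass at least \<open>(lam\<^sup>2 / c1) \<parallel>\<nu>\<parallel>\<close>.\<close>

lemma ennreal_divide_times_cancel:
  assumes "0 < p"
  shows "a / ennreal p * ennreal p = (a::ennreal)"
  using assms by (simp add: ennreal_divide_times divide_ennreal)

lemma ennreal_divide_eq_times:
  assumes "0 < p"
  shows "a / ennreal p = (a::ennreal) * ennreal (1 / p)"
  using assms by (simp add: divide_ennreal_def inverse_ennreal inverse_eq_divide)

lemma ennreal_le_inverse:
  assumes "g \<le> ennreal (1 / s)" "0 < s"
  shows "ennreal s \<le> inverse g"
proof (cases "g = 0")
  case False
  obtain a where a: "g = ennreal a" "0 < a"
    using assms(1) False by (cases g) (auto simp: top_unique)
  with assms have "s \<le> inverse a" by (simp add: field_simps)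
  then show ?thesis using a by (simp add: inverse_ennreal)
qed simp

lemma emeasure_space_le_divide:
  fixes f :: "'a \<Rightarrow> real"
  assumes lower: "AE z in N. lam \<le> f z" and bound: "(\<integral>\<^sup>+ z. ennreal (f z) \<partial>N) \<le> ennreal c"
    and "0 < lam"
  shows "emeasure N (space N) \<le> ennreal (c / lam)"
proof -
  have "ennreal lam * emeasure N (space N) = (\<integral>\<^sup>+ z. ennreal lam \<partial>N)"
    by simp
  also have "\<dots> \<le> (\<integral>\<^sup>+ z. ennreal (f z) \<partial>N)"
    using lower by (intro nn_integral_mono_AE) (auto elim!: eventually_mono intro: ennreal_leI)
  also have "\<dots> \<le> ennreal c" by (fact bound)
  finally have "ennreal (1 / lam) * (ennreal lam * emeasure N (space N)) \<le> ennreal (1 / lam) * ennreal c"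
    by (rule mult_left_mono) simp
  then show ?thesis
    using \<open>0 < lam\<close> by (simp add: mult.assoc[symmetric] ennreal_mult'[symmetric] ennreal_mult''[symmetric])
qed

text \<open>The density \<open>w / K\<close> cancels the weight \<open>w\<close> in \<open>Gt\<close>, so \<open>G\<nu> \<le> K w\<close> turns into
  \<open>Gt\<close>-potential at most 1.\<close>

lemma capt_ge_density:
  fixes G :: "'a::topological_space \<Rightarrow> 'a \<Rightarrow> ennreal"
  assumes G_meas: "\<And>v. G v \<in> borel_measurable borel" and w_meas: "w \<in> borel_measurable borel"
    and w_pos: "\<And>z. 0 < w z" and w_le_1: "\<And>z. w z \<le> 1"
    and "fin_borel \<nu>" and carried: "AE z in \<nu>. z \<in> B" and "B \<subseteq> E" and "E \<in> sets borel"
    and "0 < lam" and lam_le_w: "\<And>z. z \<in> B \<Longrightarrow> lam \<le> w z" and "0 < K"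
    and Gpot_le: "\<And>v. Gpot G \<nu> v \<le> ennreal (K * w v)"
  shows "ennreal (lam / K * measure \<nu> (space \<nu>)) \<le> capt G w E"
proof -
  have sets_\<nu>: "sets \<nu> = sets borel" and "finite_measure \<nu>"
    using \<open>fin_borel \<nu>\<close> by (auto simp: fin_borel_def)
  have measurable_\<nu>: "borel_measurable \<nu> = borel_measurable borel"
    by (rule measurable_cong_sets) (simp_all add: sets_\<nu>)
  define f where "f z = ennreal (w z / K)" for z
  define M where "M = density \<nu> f"
  have f_meas: "f \<in> borel_measurable \<nu>"
    unfolding measurable_\<nu> f_def using w_meas by measurable
  have sets_M: "sets M = sets borel" by (simp add: M_def sets_\<nu>)
  have mass_M: "emeasure M (space M) = (\<integral>\<^sup>+ z. f z \<partial>\<nu>)"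
    unfolding M_def space_density by (subst emeasure_density[OF f_meas]) auto
  have "(\<integral>\<^sup>+ z. f z \<partial>\<nu>) \<le> (\<integral>\<^sup>+ z. ennreal (1 / K) \<partial>\<nu>)"
    using w_le_1 \<open>0 < K\<close> by (intro nn_integral_mono) (auto simp: f_def intro!: divide_right_mono)
  also have "\<dots> < \<infinity>"
    using \<open>finite_measure \<nu>\<close> by (simp add: finite_measure.emeasure_finite ennreal_mult_eq_top_iff less_top[symmetric])
  finally have "fin_borel M"
    unfolding fin_borel_def using sets_M mass_M by (auto intro: finite_measureI)
  moreover have "emeasure (completion M) (- E) = 0"
  proof -
    have "emeasure M (- E) = (\<integral>\<^sup>+ z. f z * indicator (- E) z \<partial>\<nu>)"
      unfolding M_def using \<open>E \<in> sets borel\<close> sets_\<nu> by (intro emeasure_density f_meas) auto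
    also have "\<dots> = 0"
      using carried \<open>B \<subseteq> E\<close> by (subst nn_integral_cong_AE[where v = "\<lambda>_. 0"]) (auto elim!: eventually_mono)
    finally have "- E \<in> null_sets M"
      using \<open>E \<in> sets borel\<close> sets_M by (simp add: null_sets_def)
    then show ?thesis by (intro null_setsD1 null_sets_completionI)
  qed
  moreover have "(\<integral>\<^sup>+ z. Gt G w v z \<partial>M) \<le> 1" for v
  proof -
    have Gt_meas: "(\<lambda>z. Gt G w v z) \<in> borel_measurable \<nu>"
      unfolding measurable_\<nu> Gt_def using G_meas[of v] w_meas by measurable
    have "(\<integral>\<^sup>+ z. Gt G w v z \<partial>M) = (\<integral>\<^sup>+ z. f z * Gt G w v z \<partial>\<nu>)"
      unfolding M_def by (rule nn_integral_density[OF f_meas Gt_meas])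
    also have "\<dots> = (\<integral>\<^sup>+ z. ennreal (1 / (K * w v)) * G v z \<partial>\<nu>)"
    proof (rule nn_integral_cong)
      fix z
      have "f z * ennreal (1 / (w v * w z)) = ennreal (1 / (K * w v))"
        unfolding f_def using w_pos[of z] w_pos[of v] \<open>0 < K\<close>
        by (simp add: ennreal_mult[symmetric] field_simps)
      then show "f z * Gt G w v z = ennreal (1 / (K * w v)) * G v z"
        unfolding Gt_def ennreal_divide_eq_times[OF mult_pos_pos[OF w_pos w_pos]]
        by (metis mult.assoc mult.commute)
    qed
    also have "\<dots> = ennreal (1 / (K * w v)) * Gpot G \<nu> v"
      unfolding Gpot_def using G_meas[of v] by (intro nn_integral_cmult) (simp add: measurable_\<nu>)
    also have "\<dots> \<le> ennreal (1 / (K * w v)) * ennreal (K * w v)"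
      using Gpot_le by (rule mult_left_mono) simp
    also have "\<dots> = 1"
      using w_pos[of v] \<open>0 < K\<close> by (simp add: ennreal_mult[symmetric])
    finally show ?thesis .
  qed
  ultimately have "mnorm M \<le> capt G w E"
    unfolding capt_def by (intro Sup_upper) blast
  moreover have "ennreal (lam / K * measure \<nu> (space \<nu>)) \<le> mnorm M"
  proof -
    have "ennreal (lam / K * measure \<nu> (space \<nu>)) = (\<integral>\<^sup>+ z. ennreal (lam / K) \<partial>\<nu>)"
      using \<open>0 < lam\<close> \<open>0 < K\<close>
      by (simp add: finite_measure.emeasure_eq_measure[OF \<open>finite_measure \<nu>\<close>] flip: ennreal_mult'')
    also have "\<dots> \<le> (\<integral>\<^sup>+ z. f z \<partial>\<nu>)"
      using carried \<open>0 < K\<close> lam_le_w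
      by (intro nn_integral_mono_AE) (auto elim!: eventually_mono simp: f_def intro!: ennreal_leI divide_right_mono)
    finally show ?thesis unfolding mnorm_def mass_M .
  qed
  ultimately show ?thesis by (rule order_trans[rotated])
qed

locale comparable_kernel = Metric_space "UNIV :: 'a set" rt
  for rt :: "'a::topological_space \<Rightarrow> 'a \<Rightarrow> real" +
  fixes G :: "'a \<Rightarrow> 'a \<Rightarrow> ennreal" and w :: "'a \<Rightarrow> real" and gam C :: real
  assumes mtopology_eq_euclidean: "mtopology = euclidean"
    and w_pos: "0 < w x" and w_le_1: "w x \<le> 1"
    and gam_pos: "0 < gam" and C_pos: "0 < C"
    and Gt_lower: "ennreal (1 / C) * rpow_neg (rt x y) gam \<le> Gt G w x y"
    and Gt_upper: "Gt G w x y \<le> ennreal C * rpow_neg (rt x y) gam"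
begin

lemma open_Ut: "open (Ut rt x r)"
proof -
  have "Ut rt x r = mball x r" by (auto simp: Ut_def mball_def)
  then show ?thesis using openin_mball[of x r] by (simp add: mtopology_eq_euclidean)
qed

lemma closure_Ut_subset: "closure (Ut rt x r) \<subseteq> {z. rt x z \<le> r}"
proof (rule closure_minimal)
  have "{z. rt x z \<le> r} = mcball x r" by (auto simp: mcball_def)
  then show "closed {z. rt x z \<le> r}"
    using closedin_mcball[of x r] by (simp add: mtopology_eq_euclidean)
qed (auto simp: Ut_def)

lemma weights_pos: "0 < w x * w y"
  using w_pos by (simp add: mult_pos_pos)

lemma G_le_dist:
  assumes "x \<noteq> y"
  shows "G x y \<le> ennreal (C * rt x y powr - gam * (w x * w y))"
proof -
  have "G x y = Gt G w x y * ennreal (w x * w y)"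
    unfolding Gt_def by (simp add: ennreal_divide_times_cancel[OF weights_pos])
  also have "\<dots> \<le> ennreal C * rpow_neg (rt x y) gam * ennreal (w x * w y)"
    by (intro mult_right_mono Gt_upper) simp
  also have "\<dots> = ennreal (C * rt x y powr - gam * (w x * w y))"
    using assms C_pos weights_pos[of x y]
    by (simp add: rpow_neg_def less_imp_le flip: ennreal_mult)
  finally show ?thesis .
qed

lemma G_ge_dist:
  assumes "x \<noteq> y"
  shows "ennreal (rt x y powr - gam * (w x * w y) / C) \<le> G x y"
proof -
  have "ennreal (rt x y powr - gam * (w x * w y) / C)
        = ennreal (1 / C) * rpow_neg (rt x y) gam * ennreal (w x * w y)"
    using assms C_pos weights_pos[of x y]
    by (simp add: rpow_neg_def less_imp_le flip: ennreal_mult)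
  also have "\<dots> \<le> Gt G w x y * ennreal (w x * w y)"
    by (intro mult_right_mono Gt_lower) simp
  also have "\<dots> = G x y"
    unfolding Gt_def by (simp add: ennreal_divide_times_cancel[OF weights_pos])
  finally show ?thesis .
qed

lemma Vset_subset_Ut:
  assumes "0 < \<rho>"
  shows "Vset G x (\<rho> powr gam / C) \<subseteq> Ut rt x \<rho>"
proof
  fix y assume y: "y \<in> Vset G x (\<rho> powr gam / C)"
  show "y \<in> Ut rt x \<rho>"
  proof (rule ccontr)
    assume "y \<notin> Ut rt x \<rho>"
    then have far: "\<rho> \<le> rt y x" by (simp add: Ut_def commute)
    with assms have "y \<noteq> x" by auto
    have "C * rt y x powr - gam * (w y * w x) \<le> C * \<rho> powr - gam * 1"
      using far assms gam_pos C_pos w_le_1 w_pos weights_pos[of y x]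
      by (intro mult_mono powr_mono2' mult_le_one) (auto simp: less_imp_le)
    also have "\<dots> = 1 / (\<rho> powr gam / C)" by (simp add: powr_minus field_simps)
    finally have "G y x \<le> ennreal (1 / (\<rho> powr gam / C))"
      using G_le_dist[OF \<open>y \<noteq> x\<close>] order_trans ennreal_leI by blast
    then have "ennreal (\<rho> powr gam / C) \<le> inverse (G y x)"
      by (rule ennreal_le_inverse) (use assms C_pos in simp)
    with y show False by (simp add: Vset_def not_less[symmetric])
  qed
qed

lemma Gpot_le_if_far:
  assumes "finite_measure \<nu>" and far: "AE z in \<nu>. d \<le> rt y z" and "0 < d"
  shows "Gpot G \<nu> y \<le> ennreal (C * d powr - gam * w y * measure \<nu> (space \<nu>))"
proof -
  have "Gpot G \<nu> y \<le> (\<integral>\<^sup>+ z. ennreal (C * d powr - gam * w y) \<partial>\<nu>)"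
    unfolding Gpot_def
  proof (rule nn_integral_mono_AE)
    show "AE z in \<nu>. G y z \<le> ennreal (C * d powr - gam * w y)"
      using far
    proof eventually_elim
      fix z assume dz: "d \<le> rt y z"
      with \<open>0 < d\<close> have "y \<noteq> z" by auto
      have "C * rt y z powr - gam * (w y * w z) \<le> C * d powr - gam * w y"
        using dz \<open>0 < d\<close> gam_pos C_pos w_pos w_le_1
        by (intro mult_mono powr_mono2' mult_left_le) (auto simp: less_imp_le)
      then show "G y z \<le> ennreal (C * d powr - gam * w y)"
        using G_le_dist[OF \<open>y \<noteq> z\<close>] order_trans ennreal_leI by blast
    qed
  qed
  also have "\<dots> = ennreal (C * d powr - gam * w y * measure \<nu> (space \<nu>))"
    using C_pos w_pos[of y]
    by (simp add: finite_measure.emeasure_eq_measure[OF assms(1)] ennreal_mult less_imp_le)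
  finally show ?thesis .
qed

text \<open>The factor \<open>rt x y powr - gam\<close> of the lower and the upper bound cancels, which is what
  makes the estimate independent of the distance from \<open>x\<close> to the far point \<open>y\<close>.\<close>

lemma measure_ge_if_Gpot_ge:
  assumes "finite_measure \<nu>" and near: "AE z in \<nu>. rt x z < r / 2"
    and far: "r \<le> rt x y" and "0 < r" and "0 \<le> a"
    and Gpot_ge: "ennreal a * G y x \<le> Gpot G \<nu> y"
  shows "a * w x / (C\<^sup>2 * 2 powr gam) \<le> measure \<nu> (space \<nu>)"
proof -
  define D where "D = rt x y"
  define m where "m = measure \<nu> (space \<nu>)"
  have "0 < D" using far \<open>0 < r\<close> unfolding D_def by linarith
  have "AE z in \<nu>. D / 2 \<le> rt y z"
    using near
  proof eventually_elim
    fix z assume "rt x z < r / 2"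
    moreover have "D \<le> rt x z + rt z y" unfolding D_def by (rule triangle) auto
    ultimately show "D / 2 \<le> rt y z" using far by (simp add: D_def commute[of z y])
  qed
  then have upper: "Gpot G \<nu> y \<le> ennreal (C * (D / 2) powr - gam * w y * m)"
    unfolding m_def by (rule Gpot_le_if_far[OF assms(1)]) (use \<open>0 < D\<close> in simp)
  have "y \<noteq> x" using \<open>0 < D\<close> by (auto simp: D_def)
  have "ennreal (a * (D powr - gam * (w y * w x) / C))
        = ennreal a * ennreal (rt y x powr - gam * (w y * w x) / C)"
    using \<open>0 \<le> a\<close> by (simp add: D_def commute[of x y] flip: ennreal_mult')
  also have "\<dots> \<le> ennreal a * G y x"
    using G_ge_dist[OF \<open>y \<noteq> x\<close>] by (rule mult_left_mono) simp
  also have "\<dots> \<le> ennreal (C * (D / 2) powr - gam * w y * m)"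
    using Gpot_ge upper by (rule order_trans)
  finally have "a * (D powr - gam * (w y * w x) / C) \<le> C * (D powr - gam * 2 powr gam) * w y * m"
    using C_pos w_pos[of y] \<open>0 < D\<close>
    by (subst (asm) ennreal_le_iff) (auto simp: m_def powr_divide powr_minus field_simps)
  then have "a * w x / (C\<^sup>2 * 2 powr gam) * (D powr - gam * w y * (C * 2 powr gam))
             \<le> m * (D powr - gam * w y * (C * 2 powr gam))"
    using C_pos by (simp add: power2_eq_square field_simps)
  then show ?thesis
    unfolding m_def[symmetric]
    by (rule mult_right_le_imp_le) (use C_pos w_pos[of y] \<open>0 < D\<close> in simp)
qed

end

locale capacity_setting = comparable_kernel rt G w gam C
  for rt :: "'a::topological_space \<Rightarrow> 'a \<Rightarrow> real" and G w gam C +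
  fixes X0 :: "'a set" and mu :: "'a set \<Rightarrow> 'a \<Rightarrow> 'a measure" and c1 c3 lam :: real
  assumes X0_neq_UNIV: "X0 \<noteq> UNIV"
    and mu_fin_borel: "open U \<Longrightarrow> fin_borel (mu U x)"
    and mu_null: "open U \<Longrightarrow> emeasure (mu U x) U = 0"
    and G_meas: "case_prod G \<in> borel_measurable borel"
    and w_meas: "w \<in> borel_measurable borel"
    and w_supermedian: "open U \<Longrightarrow> (\<integral>\<^sup>+ y. ennreal (w y) \<partial>mu U x) \<le> ennreal (w x)"
    and lam_pos: "0 < lam" and lam_le_w: "x \<in> X0 \<Longrightarrow> lam \<le> w x"
    and c1_ge_1: "1 \<le> c1" and c3_ge_1: "1 \<le> c3"
    and G1: "\<lbrakk>open U; closure U \<subseteq> X0; x \<in> U; 0 < \<delta>; closed A; A \<subseteq> U\<rbrakk> \<Longrightarrow>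
      \<exists>B \<nu>. closed B \<and> A \<subseteq> interior B \<and> B \<subseteq> U \<and> fin_borel \<nu> \<and> emeasure \<nu> (- B) = 0 \<and>
        mnorm (eps mu B x) < ennreal c1 * mnorm (eps mu A x) + ennreal \<delta> \<and>
        (\<forall>y. mnorm (eps mu A y) \<le> Gpot G \<nu> y \<and> Gpot G \<nu> y \<le> ennreal c1 * mnorm (eps mu B y))"
    and G3: "\<lbrakk>x \<in> X0; 0 < s; ereal s < S0 X0 G x; y \<notin> Vset G x s\<rbrakk> \<Longrightarrow>
      ennreal (s / c3) * G y x \<le> mnorm (eps mu (closure (Vset G x s)) y)"
begin

lemma c1_pos: "0 < c1"
  using c1_ge_1 by simp

lemma c3_pos: "0 < c3"
  using c3_ge_1 by simp

lemma mnorm_eps_le: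
  assumes "closed B" "B \<subseteq> X0"
  shows "mnorm (eps mu B v) \<le> ennreal (w v / lam)"
proof -
  have "open (- B)" using \<open>closed B\<close> by auto
  then have "AE z in mu (- B) v. z \<in> B"
    using mu_fin_borel[of "- B" v] mu_null[of "- B" v]
    by (intro AE_I[of _ _ "- B"]) (auto simp: fin_borel_def)
  then have "AE z in mu (- B) v. lam \<le> w z"
    using \<open>B \<subseteq> X0\<close> lam_le_w by (auto elim!: eventually_mono)
  then show ?thesis
    unfolding mnorm_def eps_def
    by (rule emeasure_space_le_divide[OF _ w_supermedian lam_pos]) (use \<open>open (- B)\<close> in simp)
qed

lemma capt_ge_measure:
  assumes "fin_borel \<nu>" "AE z in \<nu>. z \<in> B" "closed B" "B \<subseteq> X0" "B \<subseteq> E" "E \<in> sets borel"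
    and Gpot_le: "\<And>v. Gpot G \<nu> v \<le> ennreal c1 * mnorm (eps mu B v)"
  shows "ennreal (lam\<^sup>2 / c1 * measure \<nu> (space \<nu>)) \<le> capt G w E"
proof -
  have "Gpot G \<nu> v \<le> ennreal (c1 / lam * w v)" for v
  proof -
    have "ennreal c1 * mnorm (eps mu B v) \<le> ennreal c1 * ennreal (w v / lam)"
      by (intro mult_left_mono mnorm_eps_le assms) simp
    then show ?thesis
      using Gpot_le[of v] c1_pos by (simp add: ennreal_mult'[symmetric])
  qed
  moreover have "\<And>v. G v \<in> borel_measurable borel"
  proof -
    fix v :: 'a
    have "(\<lambda>z. (v, z)) \<in> borel_measurable borel"
      by (intro borel_measurable_continuous_onI continuous_intros)
    from measurable_compose[OF this G_meas] show "G v \<in> borel_measurable borel" by simp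
  qed
  ultimately have "ennreal (lam / (c1 / lam) * measure \<nu> (space \<nu>)) \<le> capt G w E"
    using assms(1,2,4-6) lam_pos lam_le_w c1_pos w_meas w_pos w_le_1
    by (intro capt_ge_density[where B = B]) auto
  then show ?thesis by (simp add: power2_eq_square)
qed

lemma ereal_less_S0:
  assumes "0 < \<rho>" "{z. rt x z \<le> \<rho>} \<subseteq> X0" "0 < s" "s < \<rho> powr gam / C"
  shows "ereal s < S0 X0 G x"
proof -
  have "closure (Vset G x (\<rho> powr gam / C)) \<subseteq> X0"
    using closure_mono[OF Vset_subset_Ut[OF \<open>0 < \<rho>\<close>]] closure_Ut_subset assms(2) by blast
  then have "ereal (\<rho> powr gam / C) \<le> S0 X0 G x"
    unfolding S0_def using assms(3,4) by (intro Sup_upper) auto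
  with assms(4) show ?thesis by (metis less_ereal.simps(1) order.strict_trans2)
qed


lemma measure_ge_of_G3:
  assumes "x \<in> X0" "0 < r" "Ut rt x r \<subseteq> X0" "finite_measure \<nu>"
    and near: "AE z in \<nu>. rt x z < r / 2"
    and Gpot_ge: "\<And>y. mnorm (eps mu (closure (Vset G x ((r / 8) powr gam / C))) y) \<le> Gpot G \<nu> y"
  shows "r powr gam * lam / (16 powr gam * c3 * C ^ 3) \<le> measure \<nu> (space \<nu>)"
proof -
  define s where "s = (r / 8) powr gam / C"
  have "0 < s" using \<open>0 < r\<close> C_pos by (simp add: s_def)
  obtain y where "y \<notin> X0" using X0_neq_UNIV by auto
  then have far: "r \<le> rt x y" using assms(3) by (force simp: Ut_def)
  have "Vset G x s \<subseteq> Ut rt x r"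
    using Vset_subset_Ut[of "r / 8" x] \<open>0 < r\<close> by (auto simp: s_def Ut_def)
  then have "y \<notin> Vset G x s" using assms(3) \<open>y \<notin> X0\<close> by blast
  moreover have "ereal s < S0 X0 G x"
  proof (rule ereal_less_S0)
    show "{z. rt x z \<le> r / 4} \<subseteq> X0" using assms(2,3) by (force simp: Ut_def)
    show "s < (r / 4) powr gam / C"
      unfolding s_def using assms(2) gam_pos C_pos by (intro divide_strict_right_mono powr_less_mono2) auto
  qed (use assms(2) \<open>0 < s\<close> in auto)
  ultimately have "ennreal (s / c3) * G y x \<le> Gpot G \<nu> y"
    using G3[OF \<open>x \<in> X0\<close> \<open>0 < s\<close>] Gpot_ge[of y] by (auto simp: s_def intro: order_trans)
  then have "s / c3 * w x / (C\<^sup>2 * 2 powr gam) \<le> measure \<nu> (space \<nu>)"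
    using \<open>0 < s\<close> c3_pos by (intro measure_ge_if_Gpot_ge[OF assms(4) near far assms(2)]) auto
  moreover have "r powr gam * lam / (16 powr gam * c3 * C ^ 3) \<le> s / c3 * w x / (C\<^sup>2 * 2 powr gam)"
  proof -
    have "16 powr gam = 8 powr gam * 2 powr gam" using powr_mult[of 8 2 gam] by simp
    then have "s / c3 * lam / (C\<^sup>2 * 2 powr gam) = r powr gam * lam / (16 powr gam * c3 * C ^ 3)"
      by (simp add: s_def powr_divide power2_eq_square power3_eq_cube field_simps)
    moreover have "s / c3 * lam / (C\<^sup>2 * 2 powr gam) \<le> s / c3 * w x / (C\<^sup>2 * 2 powr gam)"
      using lam_le_w[OF \<open>x \<in> X0\<close>] \<open>0 < s\<close> c3_pos C_pos
      by (intro divide_right_mono mult_left_mono) auto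
    ultimately show ?thesis by simp
  qed
  ultimately show ?thesis by linarith
qed

lemma capt_Ut_ge:
  assumes "x \<in> X0" "0 < r" "ereal r < R0t X0 rt x"
  shows "ennreal (r powr gam * lam ^ 3 / (16 powr gam * c1 * c3 * C ^ 3)) \<le> capt G w (Ut rt x r)"
proof -
  obtain r' where "r < r'" "closure (Ut rt x r') \<subseteq> X0"
    using assms(3) unfolding R0t_def less_Sup_iff by auto
  then have Ut_X0: "Ut rt x r \<subseteq> X0" using closure_subset by (force simp: Ut_def)
  define U where "U = Ut rt x (r / 2)"
  define A where "A = closure (Vset G x ((r / 8) powr gam / C))"
  have "A \<subseteq> closure (Ut rt x (r / 8))"
    unfolding A_def using assms(2) by (intro closure_mono Vset_subset_Ut) simp
  also have "\<dots> \<subseteq> {z. rt x z \<le> r / 8}" by (rule closure_Ut_subset)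
  finally have "A \<subseteq> U" using assms(2) by (auto simp: U_def Ut_def)
  moreover have "closure U \<subseteq> X0"
    using closure_Ut_subset[of x "r / 2"] Ut_X0 assms(2) by (force simp: U_def Ut_def)
  moreover have "x \<in> U" using assms(2) by (simp add: U_def Ut_def)
  ultimately obtain B \<nu> where B: "closed B" "B \<subseteq> U" and "fin_borel \<nu>" "emeasure \<nu> (- B) = 0"
    and Gpot_bounds: "\<And>y. mnorm (eps mu A y) \<le> Gpot G \<nu> y \<and> Gpot G \<nu> y \<le> ennreal c1 * mnorm (eps mu B y)"
    using G1[of U x 1 A] open_Ut by (auto simp: U_def A_def)
  have "AE z in \<nu>. z \<in> B"
    using \<open>fin_borel \<nu>\<close> \<open>emeasure \<nu> (- B) = 0\<close> \<open>closed B\<close>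
    by (intro AE_I[of _ _ "- B"]) (auto simp: fin_borel_def)
  then have "AE z in \<nu>. rt x z < r / 2"
    using \<open>B \<subseteq> U\<close> by (auto simp: U_def Ut_def elim!: eventually_mono)
  then have mass: "r powr gam * lam / (16 powr gam * c3 * C ^ 3) \<le> measure \<nu> (space \<nu>)"
    using \<open>fin_borel \<nu>\<close> Gpot_bounds Ut_X0 assms(1,2)
    by (intro measure_ge_of_G3) (auto simp: fin_borel_def A_def)
  have "B \<subseteq> Ut rt x r" using \<open>B \<subseteq> U\<close> assms(2) by (auto simp: U_def Ut_def)
  then have capt_ge: "ennreal (lam\<^sup>2 / c1 * measure \<nu> (space \<nu>)) \<le> capt G w (Ut rt x r)"
    using \<open>fin_borel \<nu>\<close> \<open>AE z in \<nu>. z \<in> B\<close> \<open>closed B\<close> Ut_X0 Gpot_bounds open_Ut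
    by (intro capt_ge_measure) auto
  have "r powr gam * lam ^ 3 / (16 powr gam * c1 * c3 * C ^ 3)
      = lam\<^sup>2 / c1 * (r powr gam * lam / (16 powr gam * c3 * C ^ 3))"
    by (simp add: power2_eq_square power3_eq_cube ac_simps)
  also have "\<dots> \<le> lam\<^sup>2 / c1 * measure \<nu> (space \<nu>)"
    using mass c1_pos by (intro mult_left_mono) auto
  finally show ?thesis using capt_ge by (meson ennreal_leI order_trans)
qed

end

lemma capacity_setting_of_conditions:
  fixes X0 :: "'a::topological_space set"
  assumes std: "std_setting X0 mu G" and "cond_G1 X0 mu G" and G2: "cond_G2' X0 mu G w"
    and "cond_G3' X0 mu G" and kernel: "comparable_kernel rt G w gam C"
  obtains c1 c3 lam where "capacity_setting rt G w gam C X0 mu c1 c3 lam"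
proof -
  obtain c1 where "1 \<le> c1" and G1: "\<And>U x \<delta> A. \<lbrakk>open U; closure U \<subseteq> X0; x \<in> U; 0 < \<delta>; closed A; A \<subseteq> U\<rbrakk> \<Longrightarrow>
      \<exists>B \<nu>. closed B \<and> A \<subseteq> interior B \<and> B \<subseteq> U \<and> fin_borel \<nu> \<and> emeasure \<nu> (- B) = 0 \<and>
        mnorm (eps mu B x) < ennreal c1 * mnorm (eps mu A x) + ennreal \<delta> \<and>
        (\<forall>y. mnorm (eps mu A y) \<le> Gpot G \<nu> y \<and> Gpot G \<nu> y \<le> ennreal c1 * mnorm (eps mu B y))"
    using \<open>cond_G1 X0 mu G\<close> unfolding cond_G1_def by (elim exE conjE) (rule that, assumption, simp)
  obtain c3 where "1 \<le> c3" and G3: "\<And>x s y. \<lbrakk>x \<in> X0; 0 < s; ereal s < S0 X0 G x; y \<notin> Vset G x s\<rbrakk> \<Longrightarrow>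
      ennreal (s / c3) * G y x \<le> mnorm (eps mu (closure (Vset G x s)) y)"
    using \<open>cond_G3' X0 mu G\<close> unfolding cond_G3'_def by (elim exE conjE) (rule that, assumption, simp)
  obtain lam where lam: "0 < lam" "\<And>x. x \<in> X0 \<Longrightarrow> lam \<le> w x"
    using G2 unfolding cond_G2'_def by (elim exE conjE) (rule that; auto)
  have std_facts: "X0 \<noteq> UNIV" "\<And>U x. open U \<Longrightarrow> fin_borel (mu U x)"
    "\<And>U x. open U \<Longrightarrow> emeasure (mu U x) U = 0" "case_prod G \<in> borel_measurable borel"
    using std unfolding std_setting_def by simp_all
  have G2_facts: "w \<in> borel_measurable borel"
    "\<And>U x. open U \<Longrightarrow> (\<integral>\<^sup>+ y. ennreal (w y) \<partial>mu U x) \<le> ennreal (w x)"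
    using G2 unfolding cond_G2'_def by simp_all
  show ?thesis
    by (intro that capacity_setting.intro kernel capacity_setting_axioms.intro)
      (fact std_facts G2_facts lam \<open>1 \<le> c1\<close> \<open>1 \<le> c3\<close> G1 G3)+
qed

theorem corollary7p5:
  fixes X0 :: "'a::{metric_space, second_countable_topology} set"
    and mu :: "'a set \<Rightarrow> 'a \<Rightarrow> 'a measure"
    and G :: "'a \<Rightarrow> 'a \<Rightarrow> ennreal"
    and w :: "'a \<Rightarrow> real"
    and rt :: "'a \<Rightarrow> 'a \<Rightarrow> real"
    and gam C :: real
  assumes "std_setting X0 mu G"
    and "cond_G1 X0 mu G"
    and "cond_G2' X0 mu G w"
    and "cond_G3' X0 mu G"
    and "Metric_space (UNIV::'a set) rt"
    and "Metric_space.mtopology (UNIV::'a set) rt = euclidean"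
    and "gam \<ge> 1" and "C \<ge> 1"
    and "\<forall>x y. ennreal (1 / C) * rpow_neg (rt x y) gam \<le> Gt G w x y \<and>
               Gt G w x y \<le> ennreal C * rpow_neg (rt x y) gam"
  shows "\<exists>c2::real. c2 \<ge> 1 \<and> (\<forall>x \<in> X0. \<forall>r. 0 < r \<and> ereal r < R0t X0 rt x \<longrightarrow>
           ennreal (r powr gam / c2) \<le> capt G w (Ut rt x r))"
proof -
  have "comparable_kernel rt G w gam C"
    using assms(3,5-9) unfolding comparable_kernel_def comparable_kernel_axioms_def cond_G2'_def
    by auto
  with assms(1-4) obtain c1 c3 lam where "capacity_setting rt G w gam C X0 mu c1 c3 lam"
    by (rule capacity_setting_of_conditions)
  then interpret capacity_setting rt G w gam C X0 mu c1 c3 lam .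
  define c2 where "c2 = 16 powr gam * c1 * c3 * C ^ 3 / lam ^ 3"
  have "0 < c2" using c1_pos c3_pos C_pos lam_pos by (simp add: c2_def)
  have "ennreal (r powr gam / max 1 c2) \<le> capt G w (Ut rt x r)"
    if "x \<in> X0" "0 < r" "ereal r < R0t X0 rt x" for x r
  proof -
    have "r powr gam / max 1 c2 \<le> r powr gam / c2"
      using \<open>0 < c2\<close> by (intro divide_left_mono) auto
    also have "\<dots> = r powr gam * lam ^ 3 / (16 powr gam * c1 * c3 * C ^ 3)"
      using lam_pos by (simp add: c2_def)
    finally show ?thesis using capt_Ut_ge[OF that] by (meson ennreal_leI order_trans)
  qed
  then show ?thesis by (intro exI[of _ "max 1 c2"]) auto
qed

end
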